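(* Let $a>0$, $b>0$, $c>0$ and suppose that $$\Phi(x)={}_1F_2\left(a\,;b,c\,;-\frac{x^2}{4}\right)\ge 0\quad\text{for all } x\in\mathbb{R}.$$ Then for any $\gamma,\delta,\epsilon$ with $0\le\gamma<a$, $\delta\ge0$, $\epsilon\ge0$, not all three equal to zero, we have $(a-\gamma,\,b+\delta,\,c+\epsilon)\in\mathcal{P}_{1,2}$.
   Context: For $a,b,c>0$, ${}_1F_2\left(a\,;b,c\,;-\frac{x^2}{4}\right)=\sum_{k=0}^\infty \frac{(a)_k}{k!\,(b)_k(c)_k}\left(-\frac{x^2}{4}\right)^k$, where $(\alpha)_k=\Gamma(\alpha+k)/\Gamma(\alpha)$. $\mathcal{P}_{1,2}$ denotes the set of all triples $(a,b,c)$ of positive reals such that ${}_1F_2\left(a\,;b,c\,;-\frac{x^2}{4}\right)>0$ for all $x>0$. *)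

theory Defs
  imports "HOL-Analysis.Analysis"
begin

definition hyp1F2 :: "real \<Rightarrow> real \<Rightarrow> real \<Rightarrow> real \<Rightarrow> real" where
  "hyp1F2 a b c z = (\<Sum>k. pochhammer a k / (fact k * pochhammer b k * pochhammer c k) * z ^ k)"

definition P12 :: "(real \<times> real \<times> real) set" where
  "P12 = {(a, b, c). a > 0 \<and> b > 0 \<and> c > 0 \<and>
           (\<forall>x::real. x > 0 \<longrightarrow> hyp1F2 a b c (- (x^2) / 4) > 0)}"

end

theory Submission
  imports Defs "HOL-Real_Asymp.Real_Asymp"
begin

(* For p, q > 0 the Beta integral maps a power series f(z) = sum c_k z^k to
     sum c_k B(p + k, q) z^k = integral_0^1 t^(p-1) (1 - t)^(q-1) f(z t) dt,
   and B(p + k, q) = B(p, q) (p)_k / (p + q)_k. With (p, q) = (a - gamma, gamma), (b, delta)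
   or (c, epsilon) this turns the coefficients of 1F2(a; b, c) into those of 1F2(a - gamma; b, c),
   1F2(a; b + delta, c) or 1F2(a; b, c + epsilon). Hence nonnegativity on z <= 0 is preserved by
   each shift, and becomes strict positivity when the shift is nonzero, since the integrand is then
   positive near t = 0. Performing a nonzero shift last gives the theorem. *)

lemma has_integral_Beta_power:
  fixes p q :: real
  assumes "0 < p" "0 < q"
  shows "((\<lambda>t. t powr (p - 1) * (1 - t) powr (q - 1) * t ^ k) has_integral Beta (p + real k) q) {0..1}"
proof -
  have "t powr (p - 1) * (1 - t) powr (q - 1) * t ^ k = t powr (p + real k - 1) * (1 - t) powr (q - 1)"
    if "t \<in> {0..1}" for t
  proof (cases "t = 0")
    case True
    then show ?thesis by (cases k) auto
  next
    case False
    with that have "t ^ k * t powr (p - 1) = t powr (p + real k - 1)"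
      by (simp add: powr_realpow[symmetric] powr_add[symmetric] algebra_simps)
    then show ?thesis by (simp add: mult_ac)
  qed
  then show ?thesis
    using has_integral_Beta_real[of "p + real k" q] assms by (subst has_integral_cong) auto
qed

lemma Beta_pos: "0 < p \<Longrightarrow> 0 < q \<Longrightarrow> 0 < Beta p (q :: real)"
  by (simp add: Beta_def)

lemma Beta_add_nat:
  fixes p q :: real
  assumes "0 < p" "0 < q"
  shows "Beta (p + real k) q = Beta p q * pochhammer p k / pochhammer (p + q) k"
proof -
  have "p \<notin> \<int>\<^sub>\<le>\<^sub>0" "p + q \<notin> \<int>\<^sub>\<le>\<^sub>0"
    using assms by (auto elim!: nonpos_Ints_cases)
  moreover have "Gamma (p + q) > 0" "Gamma p > 0" "Gamma (p + q + real k) > 0"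
    using assms by auto
  ultimately show ?thesis
    by (simp add: Beta_def pochhammer_Gamma field_simps)
qed

lemma abs_powser_partial_sum_le:
  fixes cf :: "nat \<Rightarrow> real"
  assumes summable: "summable (\<lambda>k. norm (cf k * z ^ k))" and t: "\<bar>t\<bar> \<le> 1"
  shows "\<bar>\<Sum>k<n. cf k * (z * t) ^ k\<bar> \<le> (\<Sum>k. norm (cf k * z ^ k))"
proof -
  have "\<bar>\<Sum>k<n. cf k * (z * t) ^ k\<bar> \<le> (\<Sum>k<n. norm (cf k * z ^ k))"
  proof (rule order_trans[OF sum_abs sum_mono])
    fix k
    have "\<bar>t\<bar> ^ k \<le> 1"
      using t by (simp add: power_le_one)
    then show "\<bar>cf k * (z * t) ^ k\<bar> \<le> norm (cf k * z ^ k)"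
      by (simp add: abs_mult power_abs power_mult_distrib mult_left_le mult.assoc[symmetric])
  qed
  also have "\<dots> \<le> (\<Sum>k. norm (cf k * z ^ k))"
    by (rule sum_le_suminf[OF summable]) auto
  finally show ?thesis .
qed

lemma Beta_transform_powser:
  fixes cf :: "nat \<Rightarrow> real" and p q z :: real
  assumes p: "0 < p" and q: "0 < q" and R: "conv_radius cf = \<infinity>"
  shows "summable (\<lambda>k. cf k * Beta (p + real k) q * z ^ k)"
    and "((\<lambda>t. t powr (p - 1) * (1 - t) powr (q - 1) * (\<Sum>k. cf k * (z * t) ^ k))
          has_integral (\<Sum>k. cf k * Beta (p + real k) q * z ^ k)) {0..1}"
proof -
  define w where "w t = t powr (p - 1) * (1 - t) powr (q - 1)" for t :: real
  define f where "f n t = w t * (\<Sum>k<n. cf k * (z * t) ^ k)" for n t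
  define M where "M = (\<Sum>k. norm (cf k * z ^ k))"
  have summable_cf: "summable (\<lambda>k. cf k * x ^ k)" for x
    by (rule summable_in_conv_radius) (simp add: R)
  have M_summable: "summable (\<lambda>k. norm (cf k * z ^ k))"
    by (rule abs_summable_in_conv_radius) (simp add: R)
  have f_integral: "(f n has_integral (\<Sum>k<n. cf k * Beta (p + real k) q * z ^ k)) {0..1}" for n
  proof -
    have "f n = (\<lambda>t. \<Sum>k<n. (cf k * z ^ k) * (w t * t ^ k))"
      by (simp add: fun_eq_iff f_def sum_distrib_left power_mult_distrib mult_ac)
    moreover have "((\<lambda>t. \<Sum>k<n. (cf k * z ^ k) * (w t * t ^ k))
                     has_integral (\<Sum>k<n. (cf k * z ^ k) * Beta (p + real k) q)) {0..1}"
      by (intro has_integral_sum has_integral_mult_right finite_lessThan)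
         (use has_integral_Beta_power[OF p q] in \<open>simp add: w_def\<close>)
    ultimately show ?thesis by (simp add: mult_ac)
  qed
  have w_nonneg: "0 \<le> w t" if "t \<in> {0..1}" for t
    using that by (simp add: w_def)
  have "((\<lambda>t. M * (w t * t ^ 0)) has_integral (M * Beta (p + real 0) q)) {0..1}"
    by (rule has_integral_mult_right) (use has_integral_Beta_power[OF p q, of 0] in \<open>simp add: w_def\<close>)
  then have dominant: "(\<lambda>t. M * w t) integrable_on {0..1}"
    by (auto simp: integrable_on_def)
  have bound: "norm (f n t) \<le> M * w t" if t: "t \<in> {0..1}" for n t
    using abs_powser_partial_sum_le[OF M_summable, of t n] w_nonneg[OF t] t
    by (simp add: f_def M_def abs_mult mult.commute[of "w t"] mult_right_mono)
  have limit: "(\<lambda>n. f n t) \<longlonglongrightarrow> w t * (\<Sum>k. cf k * (z * t) ^ k)" for t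
    unfolding f_def by (intro tendsto_mult_left summable_LIMSEQ summable_cf)
  note DC = dominated_convergence[OF _ dominant bound limit]
  have f_integrable: "f n integrable_on {0..1}" for n
    using f_integral by blast
  have "(\<lambda>n. \<Sum>k<n. cf k * Beta (p + real k) q * z ^ k)
          \<longlonglongrightarrow> integral {0..1} (\<lambda>t. w t * (\<Sum>k. cf k * (z * t) ^ k))"
    using DC(2)[OF f_integrable] integral_unique[OF f_integral] by simp
  then have sums: "(\<lambda>k. cf k * Beta (p + real k) q * z ^ k)
                     sums integral {0..1} (\<lambda>t. w t * (\<Sum>k. cf k * (z * t) ^ k))"
    by (simp add: sums_def)
  then show "summable (\<lambda>k. cf k * Beta (p + real k) q * z ^ k)"
    by (rule sums_summable)
  show "((\<lambda>t. t powr (p - 1) * (1 - t) powr (q - 1) * (\<Sum>k. cf k * (z * t) ^ k))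
          has_integral (\<Sum>k. cf k * Beta (p + real k) q * z ^ k)) {0..1}"
    using DC(1)[OF f_integrable] sums_unique[OF sums] by (simp add: w_def has_integral_integral)
qed

lemma integral_pos_if_isCont_pos:
  fixes f :: "real \<Rightarrow> real"
  assumes f: "f integrable_on {a..b}" and nonneg: "\<And>t. t \<in> {a..b} \<Longrightarrow> 0 \<le> f t"
    and s: "a < s" "s < b" and cont: "isCont f s" and pos: "0 < f s"
  shows "0 < integral {a..b} f"
proof -
  obtain d where d: "0 < d" and near: "\<And>t. dist t s < d \<Longrightarrow> dist (f t) (f s) < f s / 2"
    using cont pos unfolding continuous_at_eps_delta by (metis half_gt_zero)
  define e where "e = min (d / 2) (b - s)"
  have e: "0 < e" "e < d" "s + e \<le> b"
    using d s by (auto simp: e_def)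
  have sub: "{s..s + e} \<subseteq> {a..b}"
    using e s by auto
  have "0 < e * (f s / 2)"
    using e pos by simp
  also have "e * (f s / 2) = integral {s..s + e} (\<lambda>_. f s / 2)"
    using e by simp
  also have "\<dots> \<le> integral {s..s + e} f"
  proof (rule integral_le)
    show "f integrable_on {s..s + e}"
      by (rule integrable_subinterval_real[OF f sub])
    show "f s / 2 \<le> f t" if "t \<in> {s..s + e}" for t
    proof -
      have "dist t s < d"
        using that e by (auto simp: dist_real_def)
      then have "\<bar>f t - f s\<bar> < f s / 2"
        using near by (simp add: dist_real_def)
      then show ?thesis by linarith
    qed
  qed (simp add: integrable_const_ivl)
  also have "\<dots> \<le> integral {a..b} f"
    by (rule integral_subset_le[OF sub integrable_subinterval_real[OF f sub] f])
       (use nonneg in auto)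
  finally show ?thesis .
qed

lemma Beta_transform_powser_pos:
  fixes cf :: "nat \<Rightarrow> real" and p q z :: real
  assumes p: "0 < p" and q: "0 < q" and R: "conv_radius cf = \<infinity>"
    and nonneg: "\<And>t. t \<in> {0..1} \<Longrightarrow> 0 \<le> (\<Sum>k. cf k * (z * t) ^ k)"
    and cf0: "0 < cf 0"
  shows "0 < (\<Sum>k. cf k * Beta (p + real k) q * z ^ k)"
proof -
  define F where "F x = (\<Sum>k. cf k * x ^ k)" for x
  define g where "g t = t powr (p - 1) * (1 - t) powr (q - 1) * F (z * t)" for t
  have F_cont: "isCont F x" for x
    unfolding F_def by (rule isCont_powser_converges_everywhere) (simp add: R summable_in_conv_radius)
  have "((\<lambda>t. F (z * t)) \<longlongrightarrow> F (z * 0)) (at_right 0)"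
    by (intro isCont_tendsto_compose[OF F_cont] tendsto_intros)
  moreover have "F (z * 0) = cf 0"
    by (simp add: F_def)
  ultimately have "\<forall>\<^sub>F t in at_right 0. 0 < F (z * t)"
    using cf0 by (simp add: order_tendstoD(1))
  moreover have "\<forall>\<^sub>F t in at_right 0. t \<in> {0<..<1::real}"
    by (rule eventually_at_right_real) simp
  ultimately obtain s :: real where "0 < F (z * s)" "0 < s" "s < 1"
    using eventually_happens[OF eventually_conj] by fastforce
  then have "0 < integral {0..1} g"
  proof (intro integral_pos_if_isCont_pos)
    show "g integrable_on {0..1}"
      unfolding g_def F_def by (rule has_integral_integrable[OF Beta_transform_powser(2)[OF p q R]])
    show "0 \<le> g t" if "t \<in> {0..1}" for t
      using nonneg[OF that] that by (simp add: g_def F_def)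
    show "isCont g s"
      unfolding g_def using \<open>0 < s\<close> \<open>s < 1\<close>
      by (intro continuous_intros isCont_o2[OF _ F_cont]) auto
  qed (simp_all add: g_def)
  also have "integral {0..1} g = (\<Sum>k. cf k * Beta (p + real k) q * z ^ k)"
    unfolding g_def F_def by (rule integral_unique[OF Beta_transform_powser(2)[OF p q R]])
  finally show ?thesis .
qed

definition hyp1F2_coeff :: "real \<Rightarrow> real \<Rightarrow> real \<Rightarrow> nat \<Rightarrow> real" where
  "hyp1F2_coeff a b c k = pochhammer a k / (fact k * pochhammer b k * pochhammer c k)"

lemma hyp1F2_coeff_pos: "0 < a \<Longrightarrow> 0 < b \<Longrightarrow> 0 < c \<Longrightarrow> 0 < hyp1F2_coeff a b c k"
  unfolding hyp1F2_coeff_def by (intro divide_pos_pos mult_pos_pos pochhammer_pos) auto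

lemma hyp1F2_coeff_Suc:
  assumes "0 < b" "0 < c"
  shows "hyp1F2_coeff a b c (Suc k) = hyp1F2_coeff a b c k * (a + k) / ((k + 1) * (b + k) * (c + k))"
  using pochhammer_pos[of b k] pochhammer_pos[of c k] assms
  unfolding hyp1F2_coeff_def by (simp add: pochhammer_Suc field_simps)

lemma conv_radius_hyp1F2_coeff:
  assumes a: "0 < a" and b: "0 < b" and c: "0 < c"
  shows "conv_radius (hyp1F2_coeff a b c) = \<infinity>"
proof (rule conv_radius_ratio_limit_ereal)
  show "\<forall>\<^sub>F k in sequentially. hyp1F2_coeff a b c k \<noteq> 0"
    using hyp1F2_coeff_pos[OF a b c] by (simp add: less_imp_neq[symmetric])
  have "norm (hyp1F2_coeff a b c k) / norm (hyp1F2_coeff a b c (Suc k))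
        = (k + 1) * (b + k) * (c + k) / (a + k)" for k
    using hyp1F2_coeff_pos[OF a b c, of k] a b c by (simp add: hyp1F2_coeff_Suc)
  moreover have "filterlim (\<lambda>k::nat. (k + 1) * (b + k) * (c + k) / (a + k)) at_top sequentially"
    by real_asymp
  ultimately show "(\<lambda>k. ereal (norm (hyp1F2_coeff a b c k) / norm (hyp1F2_coeff a b c (Suc k)))) \<longlonglongrightarrow> \<infinity>"
    by (simp add: tendsto_PInfty_eq_at_top)
qed

lemma hyp1F2_eq_powser: "hyp1F2 a b c z = (\<Sum>k. hyp1F2_coeff a b c k * z ^ k)"
  unfolding hyp1F2_def hyp1F2_coeff_def ..

lemma hyp1F2_commute: "hyp1F2 a b c z = hyp1F2 a c b z"
  unfolding hyp1F2_def by (simp add: mult_ac)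

lemma hyp1F2_pos_if_Beta_transform:
  assumes a: "0 < a" and b: "0 < b" and c: "0 < c" and p: "0 < p" and q: "0 < q"
    and nonneg: "\<forall>z\<le>0. 0 \<le> hyp1F2 a b c z" and z: "z \<le> 0"
    and coeff: "\<And>k. hyp1F2_coeff a b c k * Beta (p + real k) q = Beta p q * hyp1F2_coeff a' b' c' k"
  shows "0 < hyp1F2 a' b' c' z"
proof -
  note R = conv_radius_hyp1F2_coeff[OF a b c]
  have "0 < (\<Sum>k. hyp1F2_coeff a b c k * Beta (p + real k) q * z ^ k)"
  proof (rule Beta_transform_powser_pos[OF p q R])
    show "0 \<le> (\<Sum>k. hyp1F2_coeff a b c k * (z * t) ^ k)" if "t \<in> {0..1}" for t
      using nonneg that z by (simp add: hyp1F2_eq_powser mult_nonpos_nonneg)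
  qed (rule hyp1F2_coeff_pos[OF a b c])
  also have "\<dots> = (\<Sum>k. Beta p q * (hyp1F2_coeff a' b' c' k * z ^ k))"
    by (simp add: coeff mult.assoc)
  also have "\<dots> = Beta p q * hyp1F2 a' b' c' z"
  proof -
    have "summable (\<lambda>k. Beta p q * (hyp1F2_coeff a' b' c' k * z ^ k))"
      using Beta_transform_powser(1)[OF p q R, of z] by (simp add: coeff mult.assoc)
    then have "summable (\<lambda>k. hyp1F2_coeff a' b' c' k * z ^ k)"
      using Beta_pos[OF p q] by (simp add: summable_cmult_iff)
    then show ?thesis
      unfolding hyp1F2_eq_powser by (rule suminf_mult)
  qed
  finally show ?thesis
    using Beta_pos[OF p q] by (simp add: zero_less_mult_iff)
qed

lemma hyp1F2_pos_shift_a: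
  assumes a: "0 < a" and b: "0 < b" and c: "0 < c" and g: "0 < g" "g < a"
    and nonneg: "\<forall>z\<le>0. 0 \<le> hyp1F2 a b c z" and z: "z \<le> 0"
  shows "0 < hyp1F2 (a - g) b c z"
proof (rule hyp1F2_pos_if_Beta_transform[OF a b c _ g(1) nonneg z])
  show "hyp1F2_coeff a b c k * Beta (a - g + real k) g = Beta (a - g) g * hyp1F2_coeff (a - g) b c k" for k
    using Beta_add_nat[of "a - g" g k] pochhammer_pos[of a k] g
    by (simp add: hyp1F2_coeff_def field_simps)
qed (use g in simp)

lemma hyp1F2_pos_shift_b:
  assumes a: "0 < a" and b: "0 < b" and c: "0 < c" and g: "0 < g"
    and nonneg: "\<forall>z\<le>0. 0 \<le> hyp1F2 a b c z" and z: "z \<le> 0"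
  shows "0 < hyp1F2 a (b + g) c z"
proof (rule hyp1F2_pos_if_Beta_transform[OF a b c b g nonneg z])
  show "hyp1F2_coeff a b c k * Beta (b + real k) g = Beta b g * hyp1F2_coeff a (b + g) c k" for k
    using Beta_add_nat[OF b g, of k] pochhammer_pos[of b k] pochhammer_pos[of "b + g" k] b g
      pochhammer_pos[of c k] pochhammer_pos[of a k] a c
    by (simp add: hyp1F2_coeff_def field_simps)
qed

lemma hyp1F2_pos_shift_c:
  assumes "0 < a" "0 < b" "0 < c" "0 < g"
    and "\<forall>z\<le>0. 0 \<le> hyp1F2 a b c z" and "z \<le> 0"
  shows "0 < hyp1F2 a b (c + g) z"
  using hyp1F2_pos_shift_b[of a c b g z] assms by (simp add: hyp1F2_commute[of a b])

lemma hyp1F2_nonneg_shift_a: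
  assumes "0 < a" "0 < b" "0 < c" "0 \<le> g" "g < a" and "\<forall>z\<le>0. 0 \<le> hyp1F2 a b c z"
  shows "\<forall>z\<le>0. 0 \<le> hyp1F2 (a - g) b c z"
  using assms hyp1F2_pos_shift_a[of a b c g] by (cases "g = 0") (auto intro: less_imp_le)

lemma hyp1F2_nonneg_shift_b:
  assumes "0 < a" "0 < b" "0 < c" "0 \<le> g" and "\<forall>z\<le>0. 0 \<le> hyp1F2 a b c z"
  shows "\<forall>z\<le>0. 0 \<le> hyp1F2 a (b + g) c z"
  using assms hyp1F2_pos_shift_b[of a b c g] by (cases "g = 0") (auto intro: less_imp_le)

lemma hyp1F2_nonneg_shift_c:
  assumes "0 < a" "0 < b" "0 < c" "0 \<le> g" and "\<forall>z\<le>0. 0 \<le> hyp1F2 a b c z"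
  shows "\<forall>z\<le>0. 0 \<le> hyp1F2 a b (c + g) z"
  using assms hyp1F2_pos_shift_c[of a b c g] by (cases "g = 0") (auto intro: less_imp_le)

theorem lemma1:
  fixes a b c \<gamma> \<delta> \<epsilon> :: real
  assumes "a > 0" and "b > 0" and "c > 0"
    and "\<forall>x::real. hyp1F2 a b c (- (x^2) / 4) \<ge> 0"
    and "0 \<le> \<gamma>" and "\<gamma> < a" and "\<delta> \<ge> 0" and "\<epsilon> \<ge> 0"
    and "\<not> (\<gamma> = 0 \<and> \<delta> = 0 \<and> \<epsilon> = 0)"
  shows "(a - \<gamma>, b + \<delta>, c + \<epsilon>) \<in> P12"
proof -
  have nonneg: "\<forall>z\<le>0. 0 \<le> hyp1F2 a b c z"
  proof (intro allI impI)
    fix z :: real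
    assume "z \<le> 0"
    then have "z = - ((2 * sqrt (- z)) ^ 2) / 4"
      by (simp add: power_mult_distrib)
    then show "0 \<le> hyp1F2 a b c z"
      using assms(4) by metis
  qed
  have "0 < hyp1F2 (a - \<gamma>) (b + \<delta>) (c + \<epsilon>) z" if "z \<le> 0" for z
  proof -
    consider "0 < \<gamma>" | "0 < \<delta>" | "0 < \<epsilon>"
      using assms(5,7-9) by linarith
    then show ?thesis
    proof cases
      case 1
      then show ?thesis
        using assms that
        by (intro hyp1F2_pos_shift_a hyp1F2_nonneg_shift_b hyp1F2_nonneg_shift_c nonneg) auto
    next
      case 2
      then show ?thesis
        using assms that
        by (intro hyp1F2_pos_shift_b hyp1F2_nonneg_shift_a hyp1F2_nonneg_shift_c nonneg) auto
    next
      case 3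
      then show ?thesis
        using assms that
        by (intro hyp1F2_pos_shift_c hyp1F2_nonneg_shift_a hyp1F2_nonneg_shift_b nonneg) auto
    qed
  qed
  then show ?thesis
    using assms by (auto simp: P12_def)
qed

end
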